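(* Let $0<c<C<\infty$ be fixed. For $i=1,2$ let $l^i,r^i:[0,T]\times\mathbb{R}\to\mathbb{R}$ satisfy Assumption (A) with these constants $c,C$, let $s^i\in C[0,T]$ and $a^i\in\mathbb{R}$ with $l^i(T,a^i)\le0\le r^i(T,a^i)$, and let $(x^i,k^i)$ be the solution of $\mathbb{BSP}_{l^i}^{r^i}(s^i,a^i)$. Then $$\sup_{t\in[0,T]}|k^1_t-k^2_t|\le \frac{2C}{c}|a^1-a^2|+\frac{4C}{c}\sup_{t\in[0,T]}|s^1_t-s^2_t|+\frac{2}{c}\big(\bar L_T\vee\bar R_T\big),$$ where $\bar L_T=\sup_{(t,x)\in[0,T]\times\mathbb{R}}|l^1(t,x)-l^2(t,x)|$ and $\bar R_T=\sup_{(t,x)\in[0,T]\times\mathbb{R}}|r^1(t,x)-r^2(t,x)|$.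
   Context: $C[0,T]$: real continuous functions on $[0,T]$; $BV[0,T]$: functions in $C[0,T]$ starting from $0$ with bounded variation; $I[0,T]$: nondecreasing functions in $C[0,T]$ starting from $0$. Assumption (A) on $l,r:[0,T]\times\mathbb{R}\to\mathbb{R}$ (with constants $0<c<C$): (i) for each $x$, $l(\cdot,x),r(\cdot,x)\in C[0,T]$; (ii) for each $t$, $l(t,\cdot)$, $r(t,\cdot)$ strictly increasing; (iii) $c|x-y|\le|l(t,x)-l(t,y)|\le C|x-y|$ and $c|x-y|\le|r(t,x)-r(t,y)|\le C|x-y|$ for all $t,x,y$; (iv) $\inf_{t,x}(r(t,x)-l(t,x))>0$. A solution of $\mathbb{BSP}_l^r(s,a)$ (for $s\in C[0,T]$, $a\in\mathbb{R}$, $l(T,a)\le0\le r(T,a)$) is a pair $(x,k)\in C[0,T]\times BV[0,T]$ with $x_t=a+s_T-s_t+k_T-k_t$, $l(t,x_t)\le0\le r(t,x_t)$ for all $t$, and $k=k^r-k^l$, $k^r,k^l\in I[0,T]$, $\int_0^T\mathbf 1_{\{l(s,x_s)<0\}}dk^l_s=0$, $\int_0^T\mathbf 1_{\{r(s,x_s)>0\}}dk^r_s=0$; it exists and is unique under Assumption (A). *)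

theory Defs
  imports "HOL-Analysis.Analysis"
begin

text \<open>Functions on [0,T] are represented as total functions real => real; only their
values on {0..T} matter.\<close>

definition bounded_variation_on :: "real \<Rightarrow> (real \<Rightarrow> real) \<Rightarrow> bool" where
  "bounded_variation_on T f \<longleftrightarrow>
     (\<exists>B. \<forall>(n::nat) (p::nat \<Rightarrow> real). p 0 = 0 \<and> p n = T \<and> (\<forall>i<n. p i \<le> p (Suc i)) \<longrightarrow>
        (\<Sum>i<n. \<bar>f (p (Suc i)) - f (p i)\<bar>) \<le> B)"

definition BV :: "real \<Rightarrow> (real \<Rightarrow> real) set" where
  "BV T = {f. continuous_on {0..T} f \<and> f 0 = 0 \<and> bounded_variation_on T f}"

definition Incr :: "real \<Rightarrow> (real \<Rightarrow> real) set" where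
  "Incr T = {f. continuous_on {0..T} f \<and> f 0 = 0 \<and> mono_on {0..T} f}"

definition stieltjes :: "real \<Rightarrow> (real \<Rightarrow> real) \<Rightarrow> real measure" where
  "stieltjes T k = interval_measure (\<lambda>t. k (max 0 (min T t)))"

definition assumptionA ::
  "real \<Rightarrow> real \<Rightarrow> real \<Rightarrow> (real \<Rightarrow> real \<Rightarrow> real) \<Rightarrow> (real \<Rightarrow> real \<Rightarrow> real) \<Rightarrow> bool" where
  "assumptionA T c C l r \<longleftrightarrow>
     (\<forall>x. continuous_on {0..T} (\<lambda>t. l t x) \<and> continuous_on {0..T} (\<lambda>t. r t x)) \<and>
     (\<forall>t\<in>{0..T}. strict_mono (l t) \<and> strict_mono (r t)) \<and>
     (\<forall>t\<in>{0..T}. \<forall>x y.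
        c * \<bar>x - y\<bar> \<le> \<bar>l t x - l t y\<bar> \<and> \<bar>l t x - l t y\<bar> \<le> C * \<bar>x - y\<bar> \<and>
        c * \<bar>x - y\<bar> \<le> \<bar>r t x - r t y\<bar> \<and> \<bar>r t x - r t y\<bar> \<le> C * \<bar>x - y\<bar>) \<and>
     (\<exists>\<delta>>0. \<forall>t\<in>{0..T}. \<forall>x. \<delta> \<le> r t x - l t x)"

definition BSP_solution ::
  "real \<Rightarrow> (real \<Rightarrow> real \<Rightarrow> real) \<Rightarrow> (real \<Rightarrow> real \<Rightarrow> real) \<Rightarrow> (real \<Rightarrow> real) \<Rightarrow> real
    \<Rightarrow> (real \<Rightarrow> real) \<Rightarrow> (real \<Rightarrow> real) \<Rightarrow> bool" where
  "BSP_solution T l r s a x k \<longleftrightarrow>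
     continuous_on {0..T} x \<and> k \<in> BV T \<and>
     (\<forall>t\<in>{0..T}. x t = a + s T - s t + k T - k t) \<and>
     (\<forall>t\<in>{0..T}. l t (x t) \<le> 0 \<and> 0 \<le> r t (x t)) \<and>
     (\<exists>kr kl. kr \<in> Incr T \<and> kl \<in> Incr T \<and> (\<forall>t\<in>{0..T}. k t = kr t - kl t) \<and>
        (\<integral>\<^sup>+ u. indicator {u\<in>{0..T}. l u (x u) < 0} u \<partial>stieltjes T kl) = 0 \<and>
        (\<integral>\<^sup>+ u. indicator {u\<in>{0..T}. r u (x u) > 0} u \<partial>stieltjes T kr) = 0)"

end

theory Submission imports Defs begin

text \<open>Let \<open>D t = (k\<^sup>1\<^sub>T - k\<^sup>1\<^sub>t) - (k\<^sup>2\<^sub>T - k\<^sup>2\<^sub>t)\<close>; then \<open>x\<^sup>1\<^sub>t - x\<^sup>2\<^sub>t\<close> differs from \<open>D t\<close> by at most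
  \<open>P = |a\<^sup>1 - a\<^sup>2| + 2 sup |s\<^sup>1 - s\<^sup>2|\<close>. Wherever \<open>D\<close> exceeds \<open>P + (L \<or> R)/c\<close>, the lower Lipschitz
  constant \<open>c\<close> forces \<open>r\<^sup>1(t, x\<^sup>1\<^sub>t) > 0\<close> and \<open>l\<^sup>2(t, x\<^sup>2\<^sub>t) < 0\<close>, so there \<open>k\<^sup>1\<close> cannot increase and
  \<open>k\<^sup>2\<close> cannot decrease, i.e. \<open>D\<close> does not decrease. As \<open>D T = 0\<close>, \<open>D\<close> never exceeds that level.
  The symmetric bound and \<open>k\<^sup>i\<^sub>0 = 0\<close> give \<open>|k\<^sup>1 - k\<^sup>2| \<le> 2P + 2(L \<or> R)/c\<close>, which lies within the
  claimed bound because \<open>C/c > 1\<close>.\<close>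

lemma emeasure_stieltjes_Ioc:
  assumes "0 \<le> T" and "k \<in> Incr T" and "0 \<le> a" "a \<le> b" "b \<le> T"
  shows "emeasure (stieltjes T k) {a<..b} = ennreal (k b - k a)"
proof -
  define F where "F = (\<lambda>t. k (max 0 (min T t)))"
  have cont: "continuous_on {0..T} k" and mono: "mono_on {0..T} k"
    using assms(2) by (auto simp: Incr_def)
  have F_mono: "F x \<le> F y" if "x \<le> y" for x y
    unfolding F_def using assms(1) that by (intro mono_onD[OF mono]) auto
  have "continuous_on UNIV F"
    unfolding F_def using assms(1)
    by (intro continuous_on_compose2[OF cont] continuous_intros) auto
  hence "continuous (at_right x) F" for x
    by (simp add: continuous_on_eq_continuous_at continuous_at_imp_continuous_at_within)
  thus ?thesis
    using emeasure_interval_measure_Ioc_eq[of F a b, OF F_mono] assms(3-5)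
    by (simp add: stieltjes_def F_def)
qed

lemma Incr_const_on_null_Ioc:
  assumes "0 \<le> T" and k: "k \<in> Incr T"
    and null: "(\<integral>\<^sup>+ u. indicator A u \<partial>stieltjes T k) = 0"
    and "{a<..b} \<subseteq> A" and ab: "0 \<le> a" "a \<le> b" "b \<le> T"
  shows "k b = k a"
proof -
  have "emeasure (stieltjes T k) {a<..b} = (\<integral>\<^sup>+ u. indicator {a<..b} u \<partial>stieltjes T k)"
    by (simp add: stieltjes_def)
  also have "\<dots> \<le> (\<integral>\<^sup>+ u. indicator A u \<partial>stieltjes T k)"
    using \<open>{a<..b} \<subseteq> A\<close> by (intro nn_integral_mono) (auto simp: indicator_def)
  finally have "ennreal (k b - k a) = 0"
    using emeasure_stieltjes_Ioc[OF assms(1) k ab] null by simp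
  moreover have "k a \<le> k b"
    using k ab by (auto simp: Incr_def intro: mono_onD)
  ultimately show ?thesis by (simp add: ennreal_eq_0_iff)
qed

lemma assumptionA_increment_lower:
  assumes "assumptionA T c C l r" and "t \<in> {0..T}" and "x \<le> y"
  shows "c * (y - x) \<le> l t y - l t x" and "c * (y - x) \<le> r t y - r t x"
proof -
  from assms(1,2) have "strict_mono (l t)" "strict_mono (r t)"
    and "c * \<bar>y - x\<bar> \<le> \<bar>l t y - l t x\<bar>" "c * \<bar>y - x\<bar> \<le> \<bar>r t y - r t x\<bar>"
    unfolding assumptionA_def by meson+
  moreover have "l t x \<le> l t y" "r t x \<le> r t y"
    using \<open>strict_mono (l t)\<close> \<open>strict_mono (r t)\<close> \<open>x \<le> y\<close>
    by (simp_all add: strict_mono_less_eq)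
  ultimately show "c * (y - x) \<le> l t y - l t x" "c * (y - x) \<le> r t y - r t x"
    using \<open>x \<le> y\<close> by simp_all
qed

lemma reflection_inactive_of_gap:
  assumes "0 < c" and A1: "assumptionA T c C l1 r1" and A2: "assumptionA T c C l2 r2"
    and t: "t \<in> {0..T}" and "l1 t y \<le> 0" and "0 \<le> r2 t z"
    and "\<bar>l1 t z - l2 t z\<bar> \<le> m" and "\<bar>r1 t y - r2 t y\<bar> \<le> m"
    and gap: "m < c * (y - z)"
  shows "0 < r1 t y" and "l2 t z < 0"
proof -
  have "z \<le> y"
    using gap \<open>0 < c\<close> \<open>\<bar>l1 t z - l2 t z\<bar> \<le> m\<close> by (smt (verit) mult_le_0_iff)
  with assumptionA_increment_lower[OF A1 t] assumptionA_increment_lower[OF A2 t]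
  have "c * (y - z) \<le> l1 t y - l1 t z" "c * (y - z) \<le> r2 t y - r2 t z"
    by auto
  with assms(5-9) show "0 < r1 t y" "l2 t z < 0" by linarith+
qed

lemma continuous_le_of_no_descent_above:
  fixes D :: "real \<Rightarrow> real"
  assumes cont: "continuous_on {a..b} D" and "a \<le> b" and "D b \<le> M"
    and no_descent: "\<And>t1. a < t1 \<Longrightarrow> t1 \<le> b \<Longrightarrow> (\<forall>t\<in>{a..<t1}. M < D t) \<Longrightarrow>
                          \<forall>t\<in>{a<..<t1}. D a \<le> D t"
  shows "D a \<le> M"
proof (rule ccontr)
  assume "\<not> D a \<le> M"
  define M' where "M' = (D a + M) / 2"
  have M': "M < M'" "M' < D a" using \<open>\<not> D a \<le> M\<close> by (auto simp: M'_def)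
  \<comment> \<open>\<open>t1\<close> is the first time after \<open>a\<close> at which \<open>D\<close> has come down to \<open>M'\<close>.\<close>
  define S where "S = {t \<in> {a..b}. D t \<le> M'}"
  define t1 where "t1 = Inf S"
  have "b \<in> S" using assms(2,3) M' by (auto simp: S_def)
  have "closed S"
    unfolding S_def by (intro continuous_on_closed_Collect_le cont continuous_intros closed_atLeastAtMost)
  have "bdd_below S"
    by (rule bdd_below_mono[of "{a..b}"]) (auto simp: S_def)
  with \<open>b \<in> S\<close> \<open>closed S\<close> have "t1 \<in> S"
    unfolding t1_def by (intro closed_contains_Inf) auto
  hence t1: "a \<le> t1" "t1 \<le> b" "D t1 \<le> M'" by (auto simp: S_def)
  have "a < t1" using t1 M' by (cases "a = t1") auto
  have "M < D t" if "t \<in> {a..<t1}" for t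
  proof (rule ccontr)
    assume "\<not> M < D t"
    hence "t \<in> S" using that t1 M' by (auto simp: S_def)
    hence "t1 \<le> t" unfolding t1_def using \<open>bdd_below S\<close> by (rule cInf_lower)
    thus False using that by auto
  qed
  hence "\<forall>t\<in>{a<..<t1}. D a \<le> D t"
    using no_descent[OF \<open>a < t1\<close> \<open>t1 \<le> b\<close>] by blast
  moreover have "continuous_on {a..t1} D"
    using t1 by (intro continuous_on_subset[OF cont]) auto
  ultimately have "D a \<le> D t1"
    using continuous_ge_on_closure[of "{a<..<t1}" D t1 "D a"] \<open>a < t1\<close>
    by (simp add: closure_greaterThanLessThan)
  thus False using t1 M' by auto
qed

lemma BSP_solution_le_where_upper_inactive:
  assumes S: "BSP_solution T l r s a x k" and "0 \<le> t0" "t0 \<le> t" "t \<le> T"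
    and inactive: "\<forall>u\<in>{t0<..t}. 0 < r u (x u)"
  shows "k t \<le> k t0"
proof -
  from S obtain kr kl where kr: "kr \<in> Incr T" and kl: "kl \<in> Incr T"
    and k: "\<forall>u\<in>{0..T}. k u = kr u - kl u"
    and kr_null: "(\<integral>\<^sup>+ u. indicator {u\<in>{0..T}. r u (x u) > 0} u \<partial>stieltjes T kr) = 0"
    unfolding BSP_solution_def by blast
  have "kr t = kr t0"
    using assms(2-4) inactive by (intro Incr_const_on_null_Ioc[OF _ kr kr_null]) auto
  moreover have "kl t0 \<le> kl t"
    using kl assms(2-4) by (auto simp: Incr_def intro: mono_onD)
  ultimately show ?thesis using k assms(2-4) by simp
qed

lemma BSP_solution_ge_where_lower_inactive:
  assumes S: "BSP_solution T l r s a x k" and "0 \<le> t0" "t0 \<le> t" "t \<le> T"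
    and inactive: "\<forall>u\<in>{t0<..t}. l u (x u) < 0"
  shows "k t0 \<le> k t"
proof -
  from S obtain kr kl where kr: "kr \<in> Incr T" and kl: "kl \<in> Incr T"
    and k: "\<forall>u\<in>{0..T}. k u = kr u - kl u"
    and kl_null: "(\<integral>\<^sup>+ u. indicator {u\<in>{0..T}. l u (x u) < 0} u \<partial>stieltjes T kl) = 0"
    unfolding BSP_solution_def by blast
  have "kl t = kl t0"
    using assms(2-4) inactive by (intro Incr_const_on_null_Ioc[OF _ kl kl_null]) auto
  moreover have "kr t0 \<le> kr t"
    using kr assms(2-4) by (auto simp: Incr_def intro: mono_onD)
  ultimately show ?thesis using k assms(2-4) by simp
qed

lemma BSP_solution_increment_difference_upper:
  assumes "0 < T" and "0 < c"
    and A1: "assumptionA T c C l1 r1" and A2: "assumptionA T c C l2 r2"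
    and S1: "BSP_solution T l1 r1 s1 a1 x1 k1" and S2: "BSP_solution T l2 r2 s2 a2 x2 k2"
    and L: "\<forall>t\<in>{0..T}. \<forall>x. \<bar>l1 t x - l2 t x\<bar> \<le> m"
    and R: "\<forall>t\<in>{0..T}. \<forall>x. \<bar>r1 t x - r2 t x\<bar> \<le> m"
    and P: "\<forall>t\<in>{0..T}. \<bar>(a1 + s1 T - s1 t) - (a2 + s2 T - s2 t)\<bar> \<le> P"
    and t0: "t0 \<in> {0..T}"
  shows "(k1 T - k1 t0) - (k2 T - k2 t0) \<le> P + m / c"
proof -
  from S1 S2 have x1: "\<forall>t\<in>{0..T}. x1 t = a1 + s1 T - s1 t + k1 T - k1 t"
    and x2: "\<forall>t\<in>{0..T}. x2 t = a2 + s2 T - s2 t + k2 T - k2 t"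
    and "continuous_on {0..T} k1" "continuous_on {0..T} k2"
    and x1_below: "\<forall>t\<in>{0..T}. l1 t (x1 t) \<le> 0" and x2_above: "\<forall>t\<in>{0..T}. 0 \<le> r2 t (x2 t)"
    unfolding BSP_solution_def BV_def by blast+
  define D where "D = (\<lambda>t. (k1 T - k1 t) - (k2 T - k2 t))"
  have "0 \<le> P" "0 \<le> m"
    using P L \<open>0 < T\<close> by (meson abs_ge_zero atLeastAtMost_iff order_trans less_imp_le order_refl)+
  have "D t0 \<le> P + m / c"
  proof (rule continuous_le_of_no_descent_above[where D = D and a = t0 and b = T])
    show "continuous_on {t0..T} D"
      unfolding D_def using t0 \<open>continuous_on {0..T} k1\<close> \<open>continuous_on {0..T} k2\<close>
      by (intro continuous_intros) (auto elim: continuous_on_subset)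
    show "D T \<le> P + m / c" using \<open>0 \<le> P\<close> \<open>0 \<le> m\<close> \<open>0 < c\<close> by (simp add: D_def)
  next
    fix t1 assume "t1 \<le> T" and above: "\<forall>t\<in>{t0..<t1}. P + m / c < D t"
    have inactive: "0 < r1 t (x1 t)" "l2 t (x2 t) < 0" if "t \<in> {t0..<t1}" for t
    proof -
      have t: "t \<in> {0..T}" using that t0 \<open>t1 \<le> T\<close> by auto
      have "x1 t - x2 t = ((a1 + s1 T - s1 t) - (a2 + s2 T - s2 t)) + D t"
        using x1 x2 t by (simp add: D_def)
      hence "m / c < x1 t - x2 t" using P t above that by force
      hence gap: "m < c * (x1 t - x2 t)" using \<open>0 < c\<close> by (simp add: field_simps)
      have "l1 t (x1 t) \<le> 0" "0 \<le> r2 t (x2 t)"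
        and "\<bar>l1 t (x2 t) - l2 t (x2 t)\<bar> \<le> m" "\<bar>r1 t (x1 t) - r2 t (x1 t)\<bar> \<le> m"
        using x1_below x2_above L R t by auto
      from reflection_inactive_of_gap[OF \<open>0 < c\<close> A1 A2 t this gap]
      show "0 < r1 t (x1 t)" "l2 t (x2 t) < 0" by auto
    qed
    show "\<forall>t\<in>{t0<..<t1}. D t0 \<le> D t"
    proof
      fix t assume t: "t \<in> {t0<..<t1}"
      have "k1 t \<le> k1 t0"
        using t t0 \<open>t1 \<le> T\<close> inactive by (intro BSP_solution_le_where_upper_inactive[OF S1]) auto
      moreover have "k2 t0 \<le> k2 t"
        using t t0 \<open>t1 \<le> T\<close> inactive by (intro BSP_solution_ge_where_lower_inactive[OF S2]) auto
      ultimately show "D t0 \<le> D t" by (simp add: D_def)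
    qed
  qed (use t0 in auto)
  thus ?thesis by (simp add: D_def)
qed

lemma BSP_solution_difference_bound:
  assumes "0 < T" and "0 < c"
    and A1: "assumptionA T c C l1 r1" and A2: "assumptionA T c C l2 r2"
    and S1: "BSP_solution T l1 r1 s1 a1 x1 k1" and S2: "BSP_solution T l2 r2 s2 a2 x2 k2"
    and L: "\<forall>t\<in>{0..T}. \<forall>x. \<bar>l1 t x - l2 t x\<bar> \<le> m"
    and R: "\<forall>t\<in>{0..T}. \<forall>x. \<bar>r1 t x - r2 t x\<bar> \<le> m"
    and P: "\<forall>t\<in>{0..T}. \<bar>(a1 + s1 T - s1 t) - (a2 + s2 T - s2 t)\<bar> \<le> P"
    and t: "t \<in> {0..T}"
  shows "\<bar>k1 t - k2 t\<bar> \<le> 2 * (P + m / c)"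
proof -
  note upper = BSP_solution_increment_difference_upper[OF assms(1,2)]
  have D: "\<bar>(k1 T - k1 s) - (k2 T - k2 s)\<bar> \<le> P + m / c" if "s \<in> {0..T}" for s
  proof -
    have "(k2 T - k2 s) - (k1 T - k1 s) \<le> P + m / c"
      using L R P by (intro upper[OF A2 A1 S2 S1 _ _ _ that]) (simp_all add: abs_minus_commute)
    with upper[OF A1 A2 S1 S2 L R P that] show ?thesis by linarith
  qed
  have "k1 0 = 0" "k2 0 = 0" using S1 S2 by (auto simp: BSP_solution_def BV_def)
  hence "\<bar>k1 t - k2 t\<bar> = \<bar>((k1 T - k1 0) - (k2 T - k2 0)) - ((k1 T - k1 t) - (k2 T - k2 t))\<bar>"
    by simp
  also have "\<dots> \<le> \<bar>(k1 T - k1 0) - (k2 T - k2 0)\<bar> + \<bar>(k1 T - k1 t) - (k2 T - k2 t)\<bar>"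
    by (rule abs_triangle_ineq4)
  also have "\<dots> \<le> 2 * (P + m / c)"
    using D[of 0] D[OF t] \<open>0 < T\<close> by simp
  finally show ?thesis .
qed

theorem mainTheorem2:
  fixes T c C a1 a2 :: real
    and l1 r1 l2 r2 :: "real \<Rightarrow> real \<Rightarrow> real"
    and s1 s2 x1 x2 k1 k2 :: "real \<Rightarrow> real"
  assumes "0 < T" and "0 < c" and "c < C"
    and "assumptionA T c C l1 r1" and "assumptionA T c C l2 r2"
    and "continuous_on {0..T} s1" and "continuous_on {0..T} s2"
    and "l1 T a1 \<le> 0" and "0 \<le> r1 T a1"
    and "l2 T a2 \<le> 0" and "0 \<le> r2 T a2"
    and "BSP_solution T l1 r1 s1 a1 x1 k1"
    and "BSP_solution T l2 r2 s2 a2 x2 k2"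
  shows "\<forall>Lbar Rbar.
           (\<forall>t\<in>{0..T}. \<forall>x. \<bar>l1 t x - l2 t x\<bar> \<le> Lbar) \<longrightarrow>
           (\<forall>t\<in>{0..T}. \<forall>x. \<bar>r1 t x - r2 t x\<bar> \<le> Rbar) \<longrightarrow>
           (SUP t\<in>{0..T}. \<bar>k1 t - k2 t\<bar>)
             \<le> 2 * C / c * \<bar>a1 - a2\<bar> + 4 * C / c * (SUP t\<in>{0..T}. \<bar>s1 t - s2 t\<bar>)
               + 2 / c * max Lbar Rbar"
proof (intro allI impI)
  fix Lb Rb
  assume "\<forall>t\<in>{0..T}. \<forall>x. \<bar>l1 t x - l2 t x\<bar> \<le> Lb" and "\<forall>t\<in>{0..T}. \<forall>x. \<bar>r1 t x - r2 t x\<bar> \<le> Rb"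
  hence L: "\<forall>t\<in>{0..T}. \<forall>x. \<bar>l1 t x - l2 t x\<bar> \<le> max Lb Rb"
    and R: "\<forall>t\<in>{0..T}. \<forall>x. \<bar>r1 t x - r2 t x\<bar> \<le> max Lb Rb"
    by (meson max.coboundedI1 max.coboundedI2 order_trans)+
  define S where "S = (SUP t\<in>{0..T}. \<bar>s1 t - s2 t\<bar>)"
  have "compact ((\<lambda>t. \<bar>s1 t - s2 t\<bar>) ` {0..T})"
    using assms(6,7) by (intro compact_continuous_image continuous_intros) auto
  hence S: "\<bar>s1 t - s2 t\<bar> \<le> S" if "t \<in> {0..T}" for t
    unfolding S_def using that by (intro cSUP_upper bounded_imp_bdd_above compact_imp_bounded)
  have "0 \<le> S" using S[of 0] \<open>0 < T\<close> by force
  have "\<forall>t\<in>{0..T}. \<bar>(a1 + s1 T - s1 t) - (a2 + s2 T - s2 t)\<bar> \<le> \<bar>a1 - a2\<bar> + 2 * S"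
    using S[of T] S \<open>0 < T\<close> by (smt (verit) atLeastAtMost_iff)
  note bound = BSP_solution_difference_bound[OF assms(1,2,4,5,12,13) L R this]
  have "1 \<le> C / c" using assms(2,3) by simp
  hence "2 * \<bar>a1 - a2\<bar> \<le> 2 * (C / c) * \<bar>a1 - a2\<bar>" "4 * S \<le> 4 * (C / c) * S"
    using \<open>0 \<le> S\<close> by (intro mult_right_mono; simp)+
  hence "2 * (\<bar>a1 - a2\<bar> + 2 * S + max Lb Rb / c)
           \<le> 2 * C / c * \<bar>a1 - a2\<bar> + 4 * C / c * S + 2 / c * max Lb Rb"
    by simp
  thus "(SUP t\<in>{0..T}. \<bar>k1 t - k2 t\<bar>)
          \<le> 2 * C / c * \<bar>a1 - a2\<bar> + 4 * C / c * (SUP t\<in>{0..T}. \<bar>s1 t - s2 t\<bar>)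
            + 2 / c * max Lb Rb"
    unfolding S_def[symmetric] using bound \<open>0 < T\<close> by (intro cSUP_least) force+
qed

end
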